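(* Let $G$ be a finite group, $f\in\mathrm{Aut}(G)$, and $\Lambda$ a subgroup of $\mathrm{Fix}(G,f)=\{x\in G: f(x)=x\}$. Then there is a function $\phi:\mathscr{H}(G,\Lambda,f)\times\mathscr{H}(G,\Lambda,f)\to\Lambda$ such that $\Lambda\times_\phi\mathscr{H}(G,\Lambda,f)$ is a quandle and $$\mathrm{GAlex}(G,f)\cong\Lambda\times_\phi\mathscr{H}(G,\Lambda,f),$$ and the projection $\pi:\Lambda\times_\phi\mathscr{H}(G,\Lambda,f)\to\mathscr{H}(G,\Lambda,f)$, $(\lambda,\Lambda g)\mapsto\Lambda g$, is equivalent to $p_\Lambda:\mathrm{GAlex}(G,f)\to\mathscr{H}(G,\Lambda,f)$, $p_\Lambda(g)=\Lambda g$. Moreover, if $\Lambda=\mathrm{Fix}(G,f)$, then $\pi$ is equivalent to $\mathrm{inn}:\mathrm{GAlex}(G,f)\to\mathrm{inn}(\mathrm{GAlex}(G,f))$.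
   Context: A quandle is a set with operation $*$ satisfying $a*a=a$; unique right division; $(a*b)*c=(a*c)*(b*c)$. $R_a(y)=y*a$; $\mathrm{inn}(a)=R_a$, and $\mathrm{inn}(Q)=\{R_a\}$ is a quandle with $R_a*R_b=R_{a*b}$. $\mathrm{GAlex}(G,f)$ is the quandle on $G$ with $a*b=f(ab^{-1})b$. For a subgroup $H\le\mathrm{Fix}(G,f)$, $\mathscr{H}(G,H,f)$ is the quandle on the right cosets $\{Hg\}$ with $Ha*Hb=Hf(ab^{-1})b$. For a quandle $X$ and a (not necessarily abelian) group $\Lambda$, and a function $\phi:X\times X\to\Lambda$, $\Lambda\times_\phi X$ denotes $\Lambda\times X$ with $(\lambda,a)*(\mu,b)=(\lambda\phi(a,b),a*b)$ (when this is a quandle). Homomorphisms $f_1:A\to B$, $f_2:C\to D$ are equivalent if there are isomorphisms $i:A\to C$, $j:B\to D$ with $j f_1=f_2 i$. *)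

theory Defs
  imports "HOL-Algebra.Coset"
begin

definition quandle :: "'a set \<Rightarrow> ('a \<Rightarrow> 'a \<Rightarrow> 'a) \<Rightarrow> bool" where
  "quandle X m \<longleftrightarrow>
     (\<forall>a\<in>X. \<forall>b\<in>X. m a b \<in> X) \<and>
     (\<forall>a\<in>X. m a a = a) \<and>
     (\<forall>a\<in>X. \<forall>b\<in>X. \<exists>!x. x \<in> X \<and> m x a = b) \<and>
     (\<forall>a\<in>X. \<forall>b\<in>X. \<forall>c\<in>X. m (m a b) c = m (m a c) (m b c))"

definition quandle_hom ::
  "'a set \<Rightarrow> ('a \<Rightarrow> 'a \<Rightarrow> 'a) \<Rightarrow> 'b set \<Rightarrow> ('b \<Rightarrow> 'b \<Rightarrow> 'b) \<Rightarrow> ('a \<Rightarrow> 'b) \<Rightarrow> bool" where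
  "quandle_hom X mX Y mY h \<longleftrightarrow>
     (\<forall>a\<in>X. h a \<in> Y) \<and> (\<forall>a\<in>X. \<forall>b\<in>X. h (mX a b) = mY (h a) (h b))"

definition quandle_iso ::
  "'a set \<Rightarrow> ('a \<Rightarrow> 'a \<Rightarrow> 'a) \<Rightarrow> 'b set \<Rightarrow> ('b \<Rightarrow> 'b \<Rightarrow> 'b) \<Rightarrow> ('a \<Rightarrow> 'b) \<Rightarrow> bool" where
  "quandle_iso X mX Y mY h \<longleftrightarrow> quandle_hom X mX Y mY h \<and> bij_betw h X Y"

definition quandle_isomorphic ::
  "'a set \<Rightarrow> ('a \<Rightarrow> 'a \<Rightarrow> 'a) \<Rightarrow> 'b set \<Rightarrow> ('b \<Rightarrow> 'b \<Rightarrow> 'b) \<Rightarrow> bool" where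
  "quandle_isomorphic X mX Y mY \<longleftrightarrow> (\<exists>h. quandle_iso X mX Y mY h)"

definition hom_equivalent ::
  "'a set \<Rightarrow> ('a \<Rightarrow> 'a \<Rightarrow> 'a) \<Rightarrow> 'b set \<Rightarrow> ('b \<Rightarrow> 'b \<Rightarrow> 'b) \<Rightarrow> ('a \<Rightarrow> 'b) \<Rightarrow>
   'c set \<Rightarrow> ('c \<Rightarrow> 'c \<Rightarrow> 'c) \<Rightarrow> 'd set \<Rightarrow> ('d \<Rightarrow> 'd \<Rightarrow> 'd) \<Rightarrow> ('c \<Rightarrow> 'd) \<Rightarrow> bool" where
  "hom_equivalent A mA B mB f1 C mC D mD f2 \<longleftrightarrow>
     (\<exists>i j. quandle_iso A mA C mC i \<and> quandle_iso B mB D mD j \<and>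
            (\<forall>x\<in>A. j (f1 x) = f2 (i x)))"

definition Fix :: "('a, 'b) monoid_scheme \<Rightarrow> ('a \<Rightarrow> 'a) \<Rightarrow> 'a set" where
  "Fix G f = {x \<in> carrier G. f x = x}"

definition galex_op :: "('a, 'b) monoid_scheme \<Rightarrow> ('a \<Rightarrow> 'a) \<Rightarrow> 'a \<Rightarrow> 'a \<Rightarrow> 'a" where
  "galex_op G f a b = f (a \<otimes>\<^bsub>G\<^esub> inv\<^bsub>G\<^esub> b) \<otimes>\<^bsub>G\<^esub> b"

text \<open>The quandle H(G,H,f) on the right cosets H g (carrier: rcosets H),
  with Ha * Hb = H f(a b^-1) b, computed via chosen representatives.\<close>
definition hq_op :: "('a, 'b) monoid_scheme \<Rightarrow> 'a set \<Rightarrow> ('a \<Rightarrow> 'a) \<Rightarrow> 'a set \<Rightarrow> 'a set \<Rightarrow> 'a set" where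
  "hq_op G H f A B =
     (let a = (SOME a. a \<in> carrier G \<and> A = H #>\<^bsub>G\<^esub> a);
          b = (SOME b. b \<in> carrier G \<and> B = H #>\<^bsub>G\<^esub> b)
      in H #>\<^bsub>G\<^esub> galex_op G f a b)"

text \<open>Twisted product \<Lambda> \<times>_\<phi> X: (\<lambda>,a) * (\<mu>,b) = (\<lambda> \<phi>(a,b), a * b), where \<Lambda> is a
  subgroup of G (so its multiplication is that of G).\<close>
definition twisted_op ::
  "('a, 'b) monoid_scheme \<Rightarrow> ('x \<Rightarrow> 'x \<Rightarrow> 'x) \<Rightarrow> ('x \<Rightarrow> 'x \<Rightarrow> 'a) \<Rightarrow> 'a \<times> 'x \<Rightarrow> 'a \<times> 'x \<Rightarrow> 'a \<times> 'x" where
  "twisted_op G m phi p q = (fst p \<otimes>\<^bsub>G\<^esub> phi (snd p) (snd q), m (snd p) (snd q))"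

definition inn_map :: "'a set \<Rightarrow> ('a \<Rightarrow> 'a \<Rightarrow> 'a) \<Rightarrow> 'a \<Rightarrow> ('a \<Rightarrow> 'a)" where
  "inn_map X m a = restrict (\<lambda>y. m y a) X"

definition inn_carrier :: "'a set \<Rightarrow> ('a \<Rightarrow> 'a \<Rightarrow> 'a) \<Rightarrow> ('a \<Rightarrow> 'a) set" where
  "inn_carrier X m = inn_map X m ` X"

definition inn_op :: "'a set \<Rightarrow> ('a \<Rightarrow> 'a \<Rightarrow> 'a) \<Rightarrow> ('a \<Rightarrow> 'a) \<Rightarrow> ('a \<Rightarrow> 'a) \<Rightarrow> ('a \<Rightarrow> 'a)" where
  "inn_op X m F K =
     inn_map X m (m (SOME a. a \<in> X \<and> F = inn_map X m a) (SOME b. b \<in> X \<and> K = inn_map X m b))"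

end

theory Submission imports Defs begin

text \<open>Choose a representative \<open>s A\<close> in every right coset \<open>A\<close> of \<open>\<Lambda>\<close>. Every \<open>g \<in> G\<close> is uniquely
  \<open>\<lambda> s(\<Lambda>g)\<close> with \<open>\<lambda> \<in> \<Lambda>\<close>, and since \<open>f\<close> fixes \<open>\<Lambda>\<close> pointwise, \<open>(\<lambda>a) * (\<mu>b) = \<lambda>(a * b)\<close> in
  \<open>GAlex(G,f)\<close>. Hence \<open>(\<lambda>, A) \<mapsto> \<lambda> s(A)\<close> is an isomorphism from \<open>\<Lambda> \<times>\<^sub>\<phi> \<H>(G,\<Lambda>,f)\<close> onto
  \<open>GAlex(G,f)\<close> for the cocycle \<open>\<phi>(A,B) = (s A * s B) s(A * B)\<inverse>\<close>, and it turns the projection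
  to the second factor into the coset map. When \<open>\<Lambda> = Fix(G,f)\<close>, evaluating \<open>R\<^sub>a = R\<^sub>b\<close> at the
  identity shows \<open>R\<^sub>a = R\<^sub>b \<longleftrightarrow> \<Lambda>a = \<Lambda>b\<close>, so \<open>\<Lambda>g \<mapsto> R\<^sub>g\<close> identifies \<open>\<H>(G,\<Lambda>,f)\<close> with
  \<open>inn(GAlex(G,f))\<close>.\<close>

lemma quandle_iso_id: "quandle_iso X m X m (\<lambda>x. x)"
  by (simp add: quandle_iso_def quandle_hom_def bij_betw_def)

lemma quandle_iso_inv_into:
  assumes "quandle_iso X mX Y mY i" and closed: "\<forall>a\<in>X. \<forall>b\<in>X. mX a b \<in> X"
  shows "quandle_iso Y mY X mX (inv_into X i)"
proof -
  have hom: "\<And>a b. a \<in> X \<Longrightarrow> b \<in> X \<Longrightarrow> i (mX a b) = mY (i a) (i b)"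
    and bij: "bij_betw i X Y"
    using assms(1) by (auto simp: quandle_iso_def quandle_hom_def)
  have "inv_into X i (mY a b) = mX (inv_into X i a) (inv_into X i b)" if "a \<in> Y" "b \<in> Y" for a b
  proof -
    let ?x = "inv_into X i a" and ?y = "inv_into X i b"
    have xy: "?x \<in> X" "?y \<in> X" "i ?x = a" "i ?y = b"
      using that bij by (auto simp: bij_betw_def inv_into_into f_inv_into_f)
    then have "i (mX ?x ?y) = mY a b" using hom by simp
    moreover have "inj_on i X" using bij by (simp add: bij_betw_def)
    ultimately show ?thesis using xy closed by (metis inv_into_f_f)
  qed
  moreover have "bij_betw (inv_into X i) Y X" using bij by (rule bij_betw_inv_into)
  ultimately show ?thesis unfolding quandle_iso_def quandle_hom_def
    by (auto simp: bij_betw_def)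
qed

lemma quandle_iso_reflects_quandle:
  assumes "quandle Y mY" and "quandle_iso X mX Y mY i"
    and closed: "\<forall>a\<in>X. \<forall>b\<in>X. mX a b \<in> X"
  shows "quandle X mX"
proof -
  have into: "\<And>a. a \<in> X \<Longrightarrow> i a \<in> Y"
    and hom: "\<And>a b. a \<in> X \<Longrightarrow> b \<in> X \<Longrightarrow> i (mX a b) = mY (i a) (i b)"
    and inj: "inj_on i X" and onto: "i ` X = Y"
    using assms(2) by (auto simp: quandle_iso_def quandle_hom_def bij_betw_def)
  have idemY: "\<And>a. a \<in> Y \<Longrightarrow> mY a a = a"
    and divY: "\<And>a b. a \<in> Y \<Longrightarrow> b \<in> Y \<Longrightarrow> \<exists>!x. x \<in> Y \<and> mY x a = b"
    and distY: "\<And>a b c. a \<in> Y \<Longrightarrow> b \<in> Y \<Longrightarrow> c \<in> Y \<Longrightarrow>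
                         mY (mY a b) c = mY (mY a c) (mY b c)"
    using assms(1) unfolding quandle_def by blast+
  have cancel: "\<And>x y. x \<in> X \<Longrightarrow> y \<in> X \<Longrightarrow> i x = i y \<Longrightarrow> x = y"
    using inj by (meson inj_onD)
  have idem: "mX a a = a" if "a \<in> X" for a
    using cancel[of "mX a a" a] that by (simp add: closed hom idemY into)
  have dist: "mX (mX a b) c = mX (mX a c) (mX b c)" if "a \<in> X" "b \<in> X" "c \<in> X" for a b c
    using cancel[of "mX (mX a b) c" "mX (mX a c) (mX b c)"] that
    by (simp add: closed hom distY into)
  have div: "\<exists>!x. x \<in> X \<and> mX x a = b" if ab: "a \<in> X" "b \<in> X" for a b
  proof -
    obtain y where y: "y \<in> Y" "mY y (i a) = i b" using divY[OF into into] ab by blast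
    obtain x where x: "x \<in> X" "i x = y" using onto y(1) by blast
    have sol: "x \<in> X \<and> mX x a = b"
      using cancel[of "mX x a" b] x y ab by (simp add: closed hom)
    moreover have "z = x" if z: "z \<in> X" "mX z a = b" for z
    proof (rule cancel[OF z(1) x(1)])
      have "mY (i z) (i a) = i b" using hom[OF z(1) ab(1)] z(2) by simp
      moreover have "mY (i x) (i a) = i b" using hom[OF x(1) ab(1)] sol by simp
      ultimately
      show "i z = i x" using divY[OF into[OF ab(1)] into[OF ab(2)]] into z(1) x(1) by blast
    qed
    ultimately show ?thesis by blast
  qed
  show ?thesis unfolding quandle_def
    by (intro conjI ballI closed[rule_format] idem div dist) assumption+
qed

text \<open>By self-distributivity \<open>R\<^sub>a\<^sub>*\<^sub>b \<circ> R\<^sub>b = R\<^sub>b \<circ> R\<^sub>a\<close>, and \<open>R\<^sub>b\<close> is onto.\<close>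
lemma inn_map_mult_cong:
  assumes "quandle X m" and "a \<in> X" "a' \<in> X" "b \<in> X" "b' \<in> X"
    and a: "inn_map X m a = inn_map X m a'" and b: "inn_map X m b = inn_map X m b'"
  shows "inn_map X m (m a b) = inn_map X m (m a' b')"
proof -
  have closed: "\<And>x y. x \<in> X \<Longrightarrow> y \<in> X \<Longrightarrow> m x y \<in> X"
    and div: "\<And>x y. x \<in> X \<Longrightarrow> y \<in> X \<Longrightarrow> \<exists>z. z \<in> X \<and> m z x = y"
    and dist: "\<And>x y z. x \<in> X \<Longrightarrow> y \<in> X \<Longrightarrow> z \<in> X \<Longrightarrow>
                        m (m x y) z = m (m x z) (m y z)"
    using assms(1) unfolding quandle_def by blast+
  have right_eq: "\<And>c c' y. inn_map X m c = inn_map X m c' \<Longrightarrow> y \<in> X \<Longrightarrow> m y c = m y c'"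
    unfolding inn_map_def by (metis restrict_apply')
  have "m z (m a b) = m z (m a' b')" if z: "z \<in> X" for z
  proof -
    obtain y where y: "y \<in> X" "m y b = z" using div[OF assms(4) z] by blast
    have "m z (m a b) = m (m y a) b" using y assms dist by metis
    also have "\<dots> = m (m y a') b'" using y assms right_eq closed by metis
    also have "\<dots> = m (m y b') (m a' b')" using y assms dist by metis
    also have "m y b' = z" using y b right_eq by metis
    finally show ?thesis .
  qed
  then show ?thesis unfolding inn_map_def by (rule restrict_ext)
qed

lemma inn_op_inn_map:
  assumes "quandle X m" and "a \<in> X" "b \<in> X"
  shows "inn_op X m (inn_map X m a) (inn_map X m b) = inn_map X m (m a b)"
proof -
  define a' where "a' = (SOME a'. a' \<in> X \<and> inn_map X m a = inn_map X m a')"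
  define b' where "b' = (SOME b'. b' \<in> X \<and> inn_map X m b = inn_map X m b')"
  have a': "a' \<in> X \<and> inn_map X m a = inn_map X m a'"
    unfolding a'_def by (rule someI[of _ a]) (simp add: assms(2))
  have b': "b' \<in> X \<and> inn_map X m b = inn_map X m b'"
    unfolding b'_def by (rule someI[of _ b]) (simp add: assms(3))
  have "inn_map X m (m a' b') = inn_map X m (m a b)"
    using inn_map_mult_cong[OF assms(1) _ assms(2) _ assms(3)] a' b' by metis
  then show ?thesis by (simp only: inn_op_def flip: a'_def b'_def)
qed

locale galex_aut = group G for G (structure) +
  fixes f
  assumes aut: "f \<in> iso G G"
begin

sublocale group_hom G G f
  using aut by (simp add: group_hom_def group_hom_axioms_def iso_def is_group)

lemma galex_op_closed: "a \<in> carrier G \<Longrightarrow> b \<in> carrier G \<Longrightarrow> galex_op G f a b \<in> carrier G"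
  by (simp add: galex_op_def)

lemma galex_op_idem: "a \<in> carrier G \<Longrightarrow> galex_op G f a a = a"
  by (simp add: galex_op_def)

lemma galex_op_right_quotient:
  assumes "a \<in> carrier G" "b \<in> carrier G" "c \<in> carrier G"
  shows "galex_op G f a c \<otimes> inv (galex_op G f b c) = f (a \<otimes> inv b)"
proof -
  have "galex_op G f a c \<otimes> inv (galex_op G f b c)
          = f (a \<otimes> inv c) \<otimes> inv (f (b \<otimes> inv c))"
    using assms by (simp add: galex_op_def m_assoc inv_mult_group del: hom_mult)
      (simp add: m_assoc[symmetric])
  also have "\<dots> = f ((a \<otimes> inv c) \<otimes> inv (b \<otimes> inv c))" using assms by simp
  also have "(a \<otimes> inv c) \<otimes> inv (b \<otimes> inv c) = a \<otimes> inv b"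
    using assms by (simp add: m_assoc inv_mult_group) (simp add: m_assoc[symmetric])
  finally show ?thesis .
qed

lemma galex_op_self_distrib:
  assumes "a \<in> carrier G" "b \<in> carrier G" "c \<in> carrier G"
  shows "galex_op G f (galex_op G f a b) c = galex_op G f (galex_op G f a c) (galex_op G f b c)"
proof -
  have "galex_op G f (galex_op G f a c) (galex_op G f b c) = f (f (a \<otimes> inv b)) \<otimes> (f (b \<otimes> inv c) \<otimes> c)"
    using assms galex_op_right_quotient by (simp add: galex_op_def del: hom_mult)
  moreover have "galex_op G f (galex_op G f a b) c = f (f (a \<otimes> inv b)) \<otimes> (f (b \<otimes> inv c) \<otimes> c)"
    using assms by (simp add: galex_op_def m_assoc del: hom_mult) (simp add: m_assoc)
  ultimately show ?thesis by simp
qed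

text \<open>\<open>x * a = b\<close> means \<open>f (x a\<inverse>) = b a\<inverse>\<close>, which has a unique solution as \<open>f\<close> is bijective.\<close>
lemma galex_op_right_div:
  assumes "a \<in> carrier G" "b \<in> carrier G"
  shows "\<exists>!x. x \<in> carrier G \<and> galex_op G f x a = b"
proof -
  have bij: "bij_betw f (carrier G) (carrier G)" using aut by (simp add: iso_def)
  have "b \<otimes> inv a \<in> f ` carrier G" using bij assms by (simp add: bij_betw_def)
  then obtain y where y: "y \<in> carrier G" "f y = b \<otimes> inv a" by (auto simp del: hom_mult)
  have "galex_op G f x a = b \<longleftrightarrow> x = y \<otimes> a" if x: "x \<in> carrier G" for x
  proof -
    have "galex_op G f x a = b \<longleftrightarrow> f (x \<otimes> inv a) = f y"
      using x y assms inv_solve_right[of "f (x \<otimes> inv a)" b a]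
      by (auto simp: galex_op_def simp del: hom_mult)
    also have "\<dots> \<longleftrightarrow> x \<otimes> inv a = y"
      using x y(1) assms bij by (auto simp: bij_betw_def inj_on_eq_iff simp del: hom_mult)
    also have "\<dots> \<longleftrightarrow> x = y \<otimes> a"
      by (rule inv_solve_right'[OF y(1) x assms(1)])
    finally show ?thesis .
  qed
  then show ?thesis using y(1) assms by auto
qed

lemma galex_quandle: "quandle (carrier G) (galex_op G f)"
  unfolding quandle_def
  by (intro conjI ballI galex_op_closed galex_op_idem galex_op_right_div galex_op_self_distrib)
    assumption+

end

locale galex_fix_subgroup = galex_aut +
  fixes L
  assumes subgroup_L: "subgroup L G" and L_fixed: "L \<subseteq> Fix G f"
begin

lemma L_carrier: "l \<in> L \<Longrightarrow> l \<in> carrier G"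
  by (rule subgroup.mem_carrier[OF subgroup_L])

lemma galex_op_left_mult:
  assumes "l \<in> L" "m \<in> L" "a \<in> carrier G" "b \<in> carrier G"
  shows "galex_op G f (l \<otimes> a) (m \<otimes> b) = l \<otimes> galex_op G f a b"
proof -
  have lm: "l \<in> carrier G" "m \<in> carrier G" using assms L_carrier by auto
  have fixed: "f l = l" "f (inv m) = inv m"
    using assms L_fixed subgroup.m_inv_closed[OF subgroup_L] by (auto simp: Fix_def)
  have "(l \<otimes> a) \<otimes> inv (m \<otimes> b) = l \<otimes> (a \<otimes> inv b) \<otimes> inv m"
    using assms lm by (simp add: m_assoc inv_mult_group)
  then have "galex_op G f (l \<otimes> a) (m \<otimes> b) = l \<otimes> f (a \<otimes> inv b) \<otimes> inv m \<otimes> (m \<otimes> b)"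
    using assms lm fixed by (simp add: galex_op_def)
  also have "\<dots> = l \<otimes> galex_op G f a b"
    using assms lm by (simp add: galex_op_def m_assoc del: hom_mult) (simp add: m_assoc[symmetric])
  finally show ?thesis .
qed

lemma rcos_eq_iff:
  assumes "a \<in> carrier G" "b \<in> carrier G"
  shows "L #> a = L #> b \<longleftrightarrow> a \<otimes> inv b \<in> L"
  using assms subgroup.rcos_module[OF subgroup_L is_group assms(2,1)]
  by (metis repr_independence rcos_self subgroup_L)

lemma rcos_left_mult: "l \<in> L \<Longrightarrow> a \<in> carrier G \<Longrightarrow> L #> (l \<otimes> a) = L #> a"
  by (metis L_carrier coset_join2 coset_mult_assoc subgroup.subset subgroup_L)

lemma rcos_in_rcosets: "a \<in> carrier G \<Longrightarrow> L #> a \<in> rcosets L"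
  using rcosetsI subgroup.subset[OF subgroup_L] by blast

text \<open>The same choice of representative as in \<^const>\<open>hq_op\<close>.\<close>
definition coset_rep :: "'a set \<Rightarrow> 'a" where
  "coset_rep A = (SOME a. a \<in> carrier G \<and> A = L #> a)"

lemma coset_rep_spec: "A \<in> rcosets L \<Longrightarrow> coset_rep A \<in> carrier G \<and> L #> coset_rep A = A"
  unfolding coset_rep_def by (rule someI2_ex) (auto simp: RCOSETS_def)

lemma coset_rep_in_carrier: "A \<in> rcosets L \<Longrightarrow> coset_rep A \<in> carrier G"
  using coset_rep_spec by blast

lemma rcos_coset_rep: "A \<in> rcosets L \<Longrightarrow> L #> coset_rep A = A"
  using coset_rep_spec by blast

lemma hq_op_eq: "hq_op G L f A B = L #> galex_op G f (coset_rep A) (coset_rep B)"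
  by (simp add: hq_op_def coset_rep_def)

lemma hq_op_closed: "A \<in> rcosets L \<Longrightarrow> B \<in> rcosets L \<Longrightarrow> hq_op G L f A B \<in> rcosets L"
  by (simp add: hq_op_eq rcos_in_rcosets galex_op_closed coset_rep_in_carrier)

lemma coset_rep_rcos:
  assumes x: "x \<in> carrier G"
  shows "\<exists>l\<in>L. coset_rep (L #> x) = l \<otimes> x"
proof -
  have r: "coset_rep (L #> x) \<in> carrier G" "L #> coset_rep (L #> x) = L #> x"
    using coset_rep_spec rcos_in_rcosets x by auto
  then have "coset_rep (L #> x) \<otimes> inv x \<in> L" using rcos_eq_iff x by blast
  moreover have "coset_rep (L #> x) = (coset_rep (L #> x) \<otimes> inv x) \<otimes> x"
    using r(1) x by (simp add: m_assoc)
  ultimately show ?thesis by blast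
qed

lemma hq_op_rcos:
  assumes "a \<in> carrier G" "b \<in> carrier G"
  shows "hq_op G L f (L #> a) (L #> b) = L #> galex_op G f a b"
proof -
  obtain l m where "l \<in> L" "m \<in> L" "coset_rep (L #> a) = l \<otimes> a" "coset_rep (L #> b) = m \<otimes> b"
    using coset_rep_rcos assms by blast
  then show ?thesis
    using assms by (simp add: hq_op_eq galex_op_left_mult rcos_left_mult galex_op_closed)
qed

definition cocycle :: "'a set \<Rightarrow> 'a set \<Rightarrow> 'a" where
  "cocycle A B = galex_op G f (coset_rep A) (coset_rep B) \<otimes> inv (coset_rep (hq_op G L f A B))"

lemma cocycle_in_L:
  assumes "A \<in> rcosets L" "B \<in> rcosets L"
  shows "cocycle A B \<in> L"
proof -
  let ?g = "galex_op G f (coset_rep A) (coset_rep B)" and ?r = "coset_rep (hq_op G L f A B)"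
  have g: "?g \<in> carrier G" using galex_op_closed coset_rep_in_carrier assms by blast
  have r: "?r \<in> carrier G" "L #> ?r = L #> ?g"
    using coset_rep_spec hq_op_closed hq_op_eq assms by auto
  then show ?thesis unfolding cocycle_def using rcos_eq_iff[OF g r(1)] by simp
qed

abbreviation twisted :: "'a \<times> 'a set \<Rightarrow> 'a \<times> 'a set \<Rightarrow> 'a \<times> 'a set" where
  "twisted \<equiv> twisted_op G (hq_op G L f) cocycle"

lemma twisted_closed: "\<forall>p\<in>L \<times> rcosets L. \<forall>q\<in>L \<times> rcosets L. twisted p q \<in> L \<times> rcosets L"
  by (auto simp: twisted_op_def cocycle_in_L hq_op_closed subgroup.m_closed[OF subgroup_L])

definition twisted_to_galex :: "'a \<times> 'a set \<Rightarrow> 'a" where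
  "twisted_to_galex p = fst p \<otimes> coset_rep (snd p)"

lemma twisted_to_galex_in_carrier: "p \<in> L \<times> rcosets L \<Longrightarrow> twisted_to_galex p \<in> carrier G"
  by (auto simp: twisted_to_galex_def L_carrier coset_rep_in_carrier)

lemma rcos_twisted_to_galex: "p \<in> L \<times> rcosets L \<Longrightarrow> L #> twisted_to_galex p = snd p"
  by (auto simp: twisted_to_galex_def rcos_left_mult coset_rep_in_carrier rcos_coset_rep)

lemma twisted_to_galex_hom:
  assumes "p \<in> L \<times> rcosets L" "q \<in> L \<times> rcosets L"
  shows "twisted_to_galex (twisted p q) = galex_op G f (twisted_to_galex p) (twisted_to_galex q)"
proof -
  obtain l A m B where pq: "p = (l, A)" "q = (m, B)" "l \<in> L" "m \<in> L"
    "A \<in> rcosets L" "B \<in> rcosets L"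
    using assms by auto
  let ?g = "galex_op G f (coset_rep A) (coset_rep B)" and ?r = "coset_rep (hq_op G L f A B)"
  have c: "l \<in> carrier G" "coset_rep A \<in> carrier G" "coset_rep B \<in> carrier G" "?r \<in> carrier G"
    "?g \<in> carrier G"
    using pq L_carrier coset_rep_in_carrier hq_op_closed galex_op_closed by auto
  have "twisted_to_galex (twisted p q) = l \<otimes> (?g \<otimes> (inv ?r \<otimes> ?r))"
    using pq c by (simp add: twisted_to_galex_def twisted_op_def cocycle_def m_assoc)
  also have "\<dots> = l \<otimes> ?g" using c by simp
  also have "\<dots> = galex_op G f (twisted_to_galex p) (twisted_to_galex q)"
    using pq c galex_op_left_mult by (simp add: twisted_to_galex_def)
  finally show ?thesis .
qed

lemma twisted_to_galex_bij: "bij_betw twisted_to_galex (L \<times> rcosets L) (carrier G)"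
proof -
  have "inj_on twisted_to_galex (L \<times> rcosets L)"
  proof (rule inj_onI)
    fix p q assume p: "p \<in> L \<times> rcosets L" and q: "q \<in> L \<times> rcosets L"
      and eq: "twisted_to_galex p = twisted_to_galex q"
    have snd: "snd p = snd q" using rcos_twisted_to_galex p q eq by metis
    then have "fst p \<otimes> coset_rep (snd p) = fst q \<otimes> coset_rep (snd p)"
      using eq by (simp add: twisted_to_galex_def)
    moreover have "fst p \<in> carrier G" "fst q \<in> carrier G" "coset_rep (snd p) \<in> carrier G"
      using p q L_carrier coset_rep_in_carrier by auto
    ultimately show "p = q" using snd by (simp add: prod_eq_iff)
  qed
  moreover have "g \<in> twisted_to_galex ` (L \<times> rcosets L)" if g: "g \<in> carrier G" for g
  proof -
    obtain l where l: "l \<in> L" "coset_rep (L #> g) = l \<otimes> g" using coset_rep_rcos g by blast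
    then have "twisted_to_galex (inv l, L #> g) = g"
      using g L_carrier by (simp add: twisted_to_galex_def m_assoc[symmetric])
    moreover have "(inv l, L #> g) \<in> L \<times> rcosets L"
      using l(1) g rcos_in_rcosets subgroup.m_inv_closed[OF subgroup_L] by blast
    ultimately show ?thesis by (metis image_eqI)
  qed
  ultimately show ?thesis
    using twisted_to_galex_in_carrier unfolding bij_betw_def by blast
qed

lemma twisted_to_galex_iso:
  "quandle_iso (L \<times> rcosets L) twisted (carrier G) (galex_op G f) twisted_to_galex"
  unfolding quandle_iso_def quandle_hom_def
  using twisted_to_galex_bij twisted_to_galex_in_carrier twisted_to_galex_hom by blast

lemma twisted_quandle: "quandle (L \<times> rcosets L) twisted"
  using quandle_iso_reflects_quandle[OF galex_quandle twisted_to_galex_iso twisted_closed] .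

lemma galex_isomorphic_twisted:
  "quandle_isomorphic (carrier G) (galex_op G f) (L \<times> rcosets L) twisted"
  unfolding quandle_isomorphic_def
  using quandle_iso_inv_into[OF twisted_to_galex_iso twisted_closed] by blast

abbreviation R :: "'a \<Rightarrow> 'a \<Rightarrow> 'a" where
  "R \<equiv> inn_map (carrier G) (galex_op G f)"

lemma inn_map_eq_iff_rcos_eq:
  assumes L: "L = Fix G f" and x: "x \<in> carrier G" and y: "y \<in> carrier G"
  shows "R x = R y \<longleftrightarrow> L #> x = L #> y"
proof
  assume "R x = R y"
  then have "R x \<one> = R y \<one>" by simp
  then have "inv (f x) \<otimes> x = inv (f y) \<otimes> y" using x y by (simp add: inn_map_def galex_op_def)
  then have "x = f x \<otimes> inv (f y) \<otimes> y"
    using inv_solve_left'[of "inv (f y) \<otimes> y" "f x" x] x y by (simp add: m_assoc)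
  then have "x \<otimes> inv y = f x \<otimes> inv (f y)"
    using inv_solve_right'[of "f x \<otimes> inv (f y)" x y] x y by simp
  moreover have "f (x \<otimes> inv y) = f x \<otimes> inv (f y)" using x y by simp
  ultimately have "f (x \<otimes> inv y) = x \<otimes> inv y" by simp
  then show "L #> x = L #> y" using rcos_eq_iff x y L by (simp add: Fix_def)
next
  assume "L #> x = L #> y"
  then have l: "x \<otimes> inv y \<in> L" and xy: "x = (x \<otimes> inv y) \<otimes> y"
    using rcos_eq_iff x y by (auto simp: m_assoc)
  have "galex_op G f z x = galex_op G f z y" if z: "z \<in> carrier G" for z
    using galex_op_left_mult[OF subgroup.one_closed[OF subgroup_L] l z y] z y xy
    by (simp add: galex_op_closed)
  then show "R x = R y" unfolding inn_map_def by (rule restrict_ext)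
qed

definition coset_inn :: "'a set \<Rightarrow> 'a \<Rightarrow> 'a" where
  "coset_inn A = R (coset_rep A)"

lemma coset_inn_rcos:
  assumes "L = Fix G f" "g \<in> carrier G"
  shows "coset_inn (L #> g) = R g"
  using assms coset_rep_spec[OF rcos_in_rcosets] inn_map_eq_iff_rcos_eq unfolding coset_inn_def
  by metis

lemma coset_inn_iso:
  assumes L: "L = Fix G f"
  shows "quandle_iso (rcosets L) (hq_op G L f)
           (inn_carrier (carrier G) (galex_op G f)) (inn_op (carrier G) (galex_op G f)) coset_inn"
proof -
  have rcosets: "A \<in> rcosets L \<longleftrightarrow> (\<exists>a\<in>carrier G. A = L #> a)" for A
    by (auto simp: RCOSETS_def)
  have hom: "coset_inn (hq_op G L f A B) = inn_op (carrier G) (galex_op G f) (coset_inn A) (coset_inn B)"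
    if "A \<in> rcosets L" "B \<in> rcosets L" for A B
    using that rcosets
    by (auto simp: hq_op_rcos coset_inn_rcos[OF L] galex_op_closed inn_op_inn_map[OF galex_quandle])
  have "inj_on coset_inn (rcosets L)"
    by (rule inj_onI) (auto simp: rcosets coset_inn_rcos[OF L] inn_map_eq_iff_rcos_eq[OF L])
  moreover have "coset_inn ` (rcosets L) = inn_carrier (carrier G) (galex_op G f)"
    unfolding inn_carrier_def
    by (force simp: rcosets coset_inn_rcos[OF L] image_iff)
  ultimately show ?thesis
    using hom unfolding quandle_iso_def quandle_hom_def bij_betw_def by blast
qed

lemma coset_inn_snd:
  "L = Fix G f \<Longrightarrow> p \<in> L \<times> rcosets L \<Longrightarrow> coset_inn (snd p) = R (twisted_to_galex p)"
  by (metis coset_inn_rcos rcos_twisted_to_galex twisted_to_galex_in_carrier)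

end

theorem mainTheorem9:
  fixes G :: "('a, 'b) monoid_scheme" and f :: "'a \<Rightarrow> 'a" and L :: "'a set"
  assumes "group G" and "finite (carrier G)" and "f \<in> iso G G"
    and "subgroup L G" and "L \<subseteq> Fix G f"
  shows "\<exists>phi :: 'a set \<Rightarrow> 'a set \<Rightarrow> 'a.
           (\<forall>A\<in>rcosets\<^bsub>G\<^esub> L. \<forall>B\<in>rcosets\<^bsub>G\<^esub> L. phi A B \<in> L) \<and>
           quandle (L \<times> rcosets\<^bsub>G\<^esub> L) (twisted_op G (hq_op G L f) phi) \<and>
           quandle_isomorphic (carrier G) (galex_op G f)
             (L \<times> rcosets\<^bsub>G\<^esub> L) (twisted_op G (hq_op G L f) phi) \<and>
           hom_equivalent
             (L \<times> rcosets\<^bsub>G\<^esub> L) (twisted_op G (hq_op G L f) phi)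
             (rcosets\<^bsub>G\<^esub> L) (hq_op G L f) snd
             (carrier G) (galex_op G f)
             (rcosets\<^bsub>G\<^esub> L) (hq_op G L f) (\<lambda>g. L #>\<^bsub>G\<^esub> g) \<and>
           (L = Fix G f \<longrightarrow>
             hom_equivalent
               (L \<times> rcosets\<^bsub>G\<^esub> L) (twisted_op G (hq_op G L f) phi)
               (rcosets\<^bsub>G\<^esub> L) (hq_op G L f) snd
               (carrier G) (galex_op G f)
               (inn_carrier (carrier G) (galex_op G f)) (inn_op (carrier G) (galex_op G f))
               (inn_map (carrier G) (galex_op G f)))"
proof -
  interpret galex_fix_subgroup G f L
    using assms by (simp add: galex_fix_subgroup_def galex_fix_subgroup_axioms_def galex_aut_def
        galex_aut_axioms_def)
  have "hom_equivalent (L \<times> rcosets\<^bsub>G\<^esub> L) twisted (rcosets\<^bsub>G\<^esub> L) (hq_op G L f) snd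
          (carrier G) (galex_op G f) (rcosets\<^bsub>G\<^esub> L) (hq_op G L f) (\<lambda>g. L #>\<^bsub>G\<^esub> g)"
    unfolding hom_equivalent_def
    using twisted_to_galex_iso quandle_iso_id rcos_twisted_to_galex by metis
  moreover have "hom_equivalent (L \<times> rcosets\<^bsub>G\<^esub> L) twisted (rcosets\<^bsub>G\<^esub> L) (hq_op G L f) snd
          (carrier G) (galex_op G f) (inn_carrier (carrier G) (galex_op G f))
          (inn_op (carrier G) (galex_op G f)) R" if "L = Fix G f"
    unfolding hom_equivalent_def
    using twisted_to_galex_iso coset_inn_iso[OF that] coset_inn_snd[OF that] by metis
  ultimately show ?thesis
    using cocycle_in_L twisted_quandle galex_isomorphic_twisted by blast
qed

end
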